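(* Let $T$, $S$, $A$ be closed Hermitian subspaces in $X^2$ with $D(T)=D(S)=:D\subset D(A)$ and $T=S+A$, and assume $\rho(T)\cap\rho(S)\neq\emptyset$. (i) If $A_s$ restricted to $D$ is a finite rank operator, then $T$ is a finite rank perturbation of $S$. (ii) If $T$ is a finite rank perturbation of $S$ and $T(0)^\perp$ reduces both $S$ and $A$, then $A_s$ restricted to $D$ is a finite rank operator.
   Context: $X$ is a complex Hilbert space and $X^2=X\times X$ carries the inner product $\langle (x,f),(y,g)\rangle=\langle x,y\rangle+\langle f,g\rangle$. A subspace $T$ in $X^2$ means a linear subspace of $X^2$ (a linear relation); a linear operator in $X$ is identified with its graph. Notation: $D(T)=\{x:(x,f)\in T \text{ for some } f\}$, $T(x)=\{f:(x,f)\in T\}$, $T^{-1}=\{(f,x):(x,f)\in T\}$, $\lambda I$ is the graph of $x\mapsto \lambda x$. The adjoint is $T^*=\{(y,g)\in X^2:\langle g,x\rangle=\langle y,f\rangle \text{ for all }(x,f)\in T\}$; $T$ is Hermitian if $T\subset T^*$. For subspaces $S,A$ in $X^2$, $S+A=\{(x,f+g):(x,f)\in S,(x,g)\in A\}$. For a closed subspace $T$, set $T_\infty=\{(0,g)\in X^2:(0,g)\in T\}$ and $T_s=T\ominus T_\infty$ (orthogonal complement of $T_\infty$ in $T$), so $T=T_s\oplus T_\infty$; $T_s$ is the graph of a linear operator (the operator part of $T$) with $D(T_s)=D(T)$ and $R(T_s)\subset T(0)^\perp$. Resolvent set: $\rho(T)=\{\lambda\in\mathbb C:(\lambda I-T)^{-1}$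 is a bounded linear operator defined on all of $X\}$. Reducing subspace: a closed subspace $X_1\subset X$ with orthogonal projection $P$ onto it reduces $T$ if $\{(Px,Pf):(x,f)\in T\}\subset T$. Finite rank perturbation: for closed subspaces $T,S$ in $X^2$ with orthogonal projections $P_T,P_S$ of $X^2$ onto $T$, $S$, $T$ is a finite rank perturbation of $S$ if $P_T-P_S$ has finite-dimensional range. *)

theory Defs
  imports Complex_Main
begin

class complex_vector = real_vector +
  fixes scaleC :: "complex \<Rightarrow> 'a \<Rightarrow> 'a" (infixr \<open>*\<^sub>C\<close> 75)
  assumes scaleC_add_right: "a *\<^sub>C (x + y) = a *\<^sub>C x + a *\<^sub>C y"
    and scaleC_add_left: "(a + b) *\<^sub>C x = a *\<^sub>C x + b *\<^sub>C x"
    and scaleC_scaleC: "a *\<^sub>C (b *\<^sub>C x) = (a * b) *\<^sub>C x"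
    and scaleC_one: "1 *\<^sub>C x = x"
    and scaleR_scaleC: "scaleR r = scaleC (complex_of_real r)"

class complex_inner = complex_vector + real_normed_vector +
  fixes cinner :: "'a \<Rightarrow> 'a \<Rightarrow> complex"
  assumes cinner_commute: "cinner x y = cnj (cinner y x)"
    and cinner_add_left: "cinner (x + y) z = cinner x z + cinner y z"
    and cinner_scaleC_left: "cinner (r *\<^sub>C x) y = cnj r * cinner x y"
    and cinner_ge_zero: "0 \<le> Re (cinner x x)"
    and cinner_eq_zero_iff: "cinner x x = 0 \<longleftrightarrow> x = 0"
    and norm_eq_sqrt_cinner: "norm x = sqrt (Re (cinner x x))"

class chilbert_space = complex_inner + complete_space

definition ip2 :: "('a::complex_inner \<times> 'a) \<Rightarrow> ('a \<times> 'a) \<Rightarrow> complex" where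
  "ip2 z w = cinner (fst z) (fst w) + cinner (snd z) (snd w)"

definition is_subspace1 :: "'a::complex_inner set \<Rightarrow> bool" where
  "is_subspace1 M \<longleftrightarrow> 0 \<in> M \<and> (\<forall>x\<in>M. \<forall>y\<in>M. x + y \<in> M) \<and> (\<forall>c. \<forall>x\<in>M. c *\<^sub>C x \<in> M)"

definition is_subspace2 :: "('a::complex_inner \<times> 'a) set \<Rightarrow> bool" where
  "is_subspace2 T \<longleftrightarrow> (0, 0) \<in> T
     \<and> (\<forall>z\<in>T. \<forall>w\<in>T. (fst z + fst w, snd z + snd w) \<in> T)
     \<and> (\<forall>c. \<forall>z\<in>T. (c *\<^sub>C fst z, c *\<^sub>C snd z) \<in> T)"

definition closed_subspace2 :: "('a::complex_inner \<times> 'a) set \<Rightarrow> bool" where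
  "closed_subspace2 T \<longleftrightarrow> is_subspace2 T \<and> closed T"

definition rel_dom :: "('a \<times> 'a) set \<Rightarrow> 'a set" where
  "rel_dom T = {x. \<exists>f. (x, f) \<in> T}"

definition rel_app :: "('a \<times> 'a) set \<Rightarrow> 'a \<Rightarrow> 'a set" where
  "rel_app T x = {f. (x, f) \<in> T}"

definition rel_adjoint :: "('a::complex_inner \<times> 'a) set \<Rightarrow> ('a \<times> 'a) set" where
  "rel_adjoint T = {(y, g). \<forall>(x, f)\<in>T. cinner g x = cinner y f}"

definition hermitian :: "('a::complex_inner \<times> 'a) set \<Rightarrow> bool" where
  "hermitian T \<longleftrightarrow> T \<subseteq> rel_adjoint T"

definition rel_sum :: "('a::complex_inner \<times> 'a) set \<Rightarrow> ('a \<times> 'a) set \<Rightarrow> ('a \<times> 'a) set" where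
  "rel_sum S A = {(x, f + g) | x f g. (x, f) \<in> S \<and> (x, g) \<in> A}"

definition mult_part :: "('a::complex_inner \<times> 'a) set \<Rightarrow> ('a \<times> 'a) set" where
  "mult_part T = {(0, g) | g. (0, g) \<in> T}"

text \<open>Operator part T_s = T minus (orthogonally) T_infinity.\<close>
definition op_part :: "('a::complex_inner \<times> 'a) set \<Rightarrow> ('a \<times> 'a) set" where
  "op_part T = {z \<in> T. \<forall>w\<in>mult_part T. ip2 z w = 0}"

definition single_valued_rel :: "('a \<times> 'a) set \<Rightarrow> bool" where
  "single_valued_rel R \<longleftrightarrow> (\<forall>x f g. (x, f) \<in> R \<and> (x, g) \<in> R \<longrightarrow> f = g)"

text \<open>lambda is in the resolvent set iff (lambda I - T)^{-1} is a bounded linear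
  operator defined on all of X.\<close>
definition resolvent_set :: "('a::complex_inner \<times> 'a) set \<Rightarrow> complex set" where
  "resolvent_set T = {l. let R = {(l *\<^sub>C x - f, x) | x f. (x, f) \<in> T} in
      single_valued_rel R \<and> rel_dom R = UNIV \<and>
      (\<exists>C. \<forall>(y, x)\<in>R. norm x \<le> C * norm y)}"

definition orth_proj1 :: "'a::complex_inner set \<Rightarrow> 'a \<Rightarrow> 'a" where
  "orth_proj1 M x = (THE p. p \<in> M \<and> (\<forall>m\<in>M. cinner (x - p) m = 0))"

definition orth_proj2 :: "('a::complex_inner \<times> 'a) set \<Rightarrow> ('a \<times> 'a) \<Rightarrow> ('a \<times> 'a)" where
  "orth_proj2 T z = (THE p. p \<in> T \<and> (\<forall>m\<in>T. ip2 (fst z - fst p, snd z - snd p) m = 0))"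

definition orth_compl1 :: "'a::complex_inner set \<Rightarrow> 'a set" where
  "orth_compl1 M = {y. \<forall>g\<in>M. cinner y g = 0}"

definition fin_dim1 :: "'a::complex_inner set \<Rightarrow> bool" where
  "fin_dim1 V \<longleftrightarrow> (\<exists>B. finite B \<and> V \<subseteq> {\<Sum>b\<in>B. c b *\<^sub>C b | c. True})"

definition fin_dim2 :: "('a::complex_inner \<times> 'a) set \<Rightarrow> bool" where
  "fin_dim2 V \<longleftrightarrow> (\<exists>B. finite B \<and>
     V \<subseteq> {(\<Sum>b\<in>B. c b *\<^sub>C fst b, \<Sum>b\<in>B. c b *\<^sub>C snd b) | c. True})"

definition finite_rank_perturbation :: "('a::complex_inner \<times> 'a) set \<Rightarrow> ('a \<times> 'a) set \<Rightarrow> bool" where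
  "finite_rank_perturbation T S \<longleftrightarrow>
     fin_dim2 (range (\<lambda>z. (fst (orth_proj2 T z) - fst (orth_proj2 S z),
                            snd (orth_proj2 T z) - snd (orth_proj2 S z))))"

definition rel_restrict :: "('a \<times> 'a) set \<Rightarrow> 'a set \<Rightarrow> ('a \<times> 'a) set" where
  "rel_restrict R D = {z \<in> R. fst z \<in> D}"

definition finite_rank_operator :: "('a::complex_inner \<times> 'a) set \<Rightarrow> bool" where
  "finite_rank_operator R \<longleftrightarrow> single_valued_rel R \<and> fin_dim1 (snd ` R)"

definition reduces :: "'a::complex_inner set \<Rightarrow> ('a \<times> 'a) set \<Rightarrow> bool" where
  "reduces M T \<longleftrightarrow> is_subspace1 M \<and> closed M \<and>
     (\<forall>(x, f)\<in>T. (orth_proj1 M x, orth_proj1 M f) \<in> T)"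

end

theory Submission
  imports Defs "HOL-Analysis.Product_Vector"
begin

text \<open>Let \<open>W = T \<inter> S\<close>. As \<open>W\<close> lies in \<open>T\<close> and in \<open>S\<close>, the vector
  \<open>P\<^sub>T z - P\<^sub>S z = (P\<^sub>T z - P\<^sub>W z) - (P\<^sub>S z - P\<^sub>W z)\<close> is a difference of elements of
  \<open>T \<ominus> W\<close> and \<open>S \<ominus> W\<close>; so \<open>T\<close> is a finite rank perturbation of \<open>S\<close> once these two
  spaces are finite-dimensional.

  (i) A point of \<open>\<rho>(S)\<close> for the Hermitian \<open>S\<close> gives \<open>D(S)\<^sup>\<perp> \<subseteq> S(0)\<close>, while
  \<open>A(0) \<perp> D(A) \<supseteq> D(S)\<close>; hence \<open>A(0) \<subseteq> S(0)\<close>, and \<open>T = S + A\<close> agrees with \<open>S\<close> at every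
  \<open>x\<close> with \<open>A\<^sub>s x = 0\<close>. So \<open>(x, f) \<mapsto> A\<^sub>s x\<close> is injective on \<open>T \<ominus> W\<close> and on \<open>S \<ominus> W\<close>,
  with values in the finite-dimensional range of \<open>A\<^sub>s\<close>.

  (ii) A value \<open>g = A\<^sub>s x\<close> lies in \<open>M = T(0)\<^sup>\<perp>\<close>: \<open>x \<in> D(T) \<subseteq> M\<close> by hermiticity, \<open>M\<close>
  reduces \<open>A\<close>, and \<open>g \<perp> A(0)\<close>. The map \<open>g \<mapsto> (0, g) - P\<^sub>S (0, g)\<close> is injective on the
  range of \<open>A\<^sub>s\<close>, since \<open>g \<in> S(0) \<subseteq> T(0)\<close> forces \<open>g = 0\<close>, and it sends \<open>g\<close> to
  \<open>(P\<^sub>T - P\<^sub>S) (x, f + g)\<close> for any \<open>(x, f) \<in> S\<close>.\<close>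

section \<open>Complex inner product spaces\<close>

lemma scaleC_zero_left [simp]: "0 *\<^sub>C (x::'a::complex_vector) = 0"
  by (metis scaleR_scaleC scale_zero_left of_real_0)

interpretation cv: vector_space "scaleC :: complex \<Rightarrow> 'a \<Rightarrow> 'a::complex_vector"
  by unfold_locales (simp_all add: scaleC_add_right scaleC_add_left scaleC_scaleC scaleC_one)

lemma cinner_zero_left [simp]: "cinner 0 y = 0"
  using cinner_add_left[of 0 0 y] by simp

lemma cinner_zero_right [simp]: "cinner x 0 = 0"
  by (metis cinner_commute cinner_zero_left complex_cnj_zero)

lemma cinner_add_right: "cinner x (y + z) = cinner x y + cinner x z"
  by (metis cinner_commute cinner_add_left complex_cnj_add)

lemma cinner_scaleC_right: "cinner x (r *\<^sub>C y) = r * cinner x y"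
  by (metis cinner_commute cinner_scaleC_left complex_cnj_cnj complex_cnj_mult)

lemma cinner_minus_left: "cinner (- x) y = - cinner x y"
  using cinner_add_left[of "- x" x y] by (simp add: eq_neg_iff_add_eq_0)

lemma cinner_minus_right: "cinner x (- y) = - cinner x y"
  by (metis cinner_commute cinner_minus_left complex_cnj_minus)

lemma cinner_diff_left: "cinner (x - y) z = cinner x z - cinner y z"
  by (simp only: diff_conv_add_uminus cinner_add_left cinner_minus_left)

lemma cinner_diff_right: "cinner x (y - z) = cinner x y - cinner x z"
  by (simp only: diff_conv_add_uminus cinner_add_right cinner_minus_right)

lemma cinner_self_eq_zero: "cinner x x = 0 \<Longrightarrow> x = 0"
  using cinner_eq_zero_iff by blast

lemma cinner_orthogonal_commute: "cinner x y = 0 \<longleftrightarrow> cinner y x = 0"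
  by (metis cinner_commute complex_cnj_zero_iff)

lemma cinner_self_eq_norm_sq: "cinner x x = complex_of_real ((norm x)\<^sup>2)"
proof -
  have "Im (cinner x x) = Im (cnj (cinner x x))"
    using cinner_commute[of x x] by simp
  then have "Im (cinner x x) = 0" by simp
  moreover have "(norm x)\<^sup>2 = Re (cinner x x)"
    using norm_eq_sqrt_cinner[of x] cinner_ge_zero[of x] by simp
  ultimately show ?thesis by (simp add: complex_eq_iff)
qed

lemma norm_sq_eq_Re_cinner: "(norm x)\<^sup>2 = Re (cinner x x)"
  using cinner_self_eq_norm_sq[of x] by simp

lemma norm_scaleC: "norm (c *\<^sub>C (x::'a::complex_inner)) = cmod c * norm x"
proof -
  have "cinner (c *\<^sub>C x) (c *\<^sub>C x) = (c * cnj c) * cinner x x"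
    by (simp add: cinner_scaleC_left cinner_scaleC_right)
  also have "\<dots> = complex_of_real ((cmod c)\<^sup>2 * (norm x)\<^sup>2)"
    by (simp only: cinner_self_eq_norm_sq complex_norm_square[symmetric] of_real_mult of_real_power)
  finally have "(norm (c *\<^sub>C x))\<^sup>2 = (cmod c * norm x)\<^sup>2"
    by (simp add: norm_sq_eq_Re_cinner power_mult_distrib)
  then show ?thesis by (simp add: power2_eq_iff_nonneg)
qed

lemma norm_add_sq: "(norm (x + y))\<^sup>2 = (norm x)\<^sup>2 + (norm y)\<^sup>2 + 2 * Re (cinner x y)"
proof -
  have "Re (cinner y x) = Re (cinner x y)"
    using cinner_commute[of y x] by simp
  moreover have "cinner (x + y) (x + y) = cinner x x + cinner y y + (cinner x y + cinner y x)"
    by (simp add: cinner_add_left cinner_add_right ac_simps)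
  ultimately show ?thesis by (simp add: norm_sq_eq_Re_cinner)
qed

lemma norm_diff_sq: "(norm (x - y))\<^sup>2 = (norm x)\<^sup>2 + (norm y)\<^sup>2 - 2 * Re (cinner x y)"
  using norm_add_sq[of x "- y"] by (simp add: cinner_minus_right)

lemma parallelogram_law:
  "(norm (x + y))\<^sup>2 + (norm (x - y))\<^sup>2 = 2 * (norm (x::'a::complex_inner))\<^sup>2 + 2 * (norm y)\<^sup>2"
  using norm_add_sq[of x y] norm_diff_sq[of x y] by simp

lemma is_subspace1_cv: "is_subspace1 M \<longleftrightarrow> cv.subspace M"
  unfolding is_subspace1_def cv.subspace_def by simp

lemma is_subspace1_zero: "is_subspace1 M \<Longrightarrow> 0 \<in> M"
  unfolding is_subspace1_def by blast

lemma is_subspace1_add: "is_subspace1 M \<Longrightarrow> x \<in> M \<Longrightarrow> y \<in> M \<Longrightarrow> x + y \<in> M"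
  unfolding is_subspace1_def by blast

lemma is_subspace1_scaleC: "is_subspace1 M \<Longrightarrow> x \<in> M \<Longrightarrow> c *\<^sub>C x \<in> M"
  unfolding is_subspace1_def by blast

lemma is_subspace1_diff: "is_subspace1 M \<Longrightarrow> x \<in> M \<Longrightarrow> y \<in> M \<Longrightarrow> x - y \<in> M"
  unfolding is_subspace1_cv by (rule cv.subspace_diff)

lemma is_subspace1_scaleR: "is_subspace1 M \<Longrightarrow> x \<in> M \<Longrightarrow> r *\<^sub>R x \<in> M"
  by (simp add: scaleR_scaleC is_subspace1_scaleC)

lemma is_subspace1_orthogonal:
  "is_subspace1 M \<Longrightarrow> is_subspace1 {x \<in> M. \<forall>w\<in>W. cinner x w = 0}"
  unfolding is_subspace1_def by (simp add: cinner_add_left cinner_scaleC_left)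

section \<open>Orthogonal projections\<close>

lemma nearest_point_Cauchy_estimate:
  fixes x :: "'a::complex_inner"
  assumes "is_subspace1 M" "m \<in> M" "m' \<in> M" and d: "\<And>q. q \<in> M \<Longrightarrow> d \<le> (norm (x - q))\<^sup>2"
  shows "(norm (m - m'))\<^sup>2 \<le> 2 * ((norm (x - m))\<^sup>2 - d) + 2 * ((norm (x - m'))\<^sup>2 - d)"
proof -
  have "(1/2) *\<^sub>R (m + m') \<in> M"
    using assms by (simp add: is_subspace1_add is_subspace1_scaleR)
  then have "4 * d \<le> 4 * (norm (x - (1/2) *\<^sub>R (m + m')))\<^sup>2"
    using d by simp
  also have "\<dots> = (norm ((x - m) + (x - m')))\<^sup>2"
  proof -
    have "(x - m) + (x - m') = 2 *\<^sub>R (x - (1/2) *\<^sub>R (m + m'))"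
      by (simp add: algebra_simps scaleR_2)
    then show ?thesis by (simp add: power_mult_distrib)
  qed
  finally show ?thesis
    using parallelogram_law[of "x - m" "x - m'"] by (simp add: norm_minus_commute)
qed

lemma nearest_point_exists:
  fixes x :: "'a::chilbert_space"
  assumes sub: "is_subspace1 M" and cl: "closed M"
  shows "\<exists>p\<in>M. \<forall>q\<in>M. norm (x - p) \<le> norm (x - q)"
proof -
  define d where "d = Inf ((\<lambda>q. (norm (x - q))\<^sup>2) ` M)"
  have ne: "M \<noteq> {}" using is_subspace1_zero[OF sub] by auto
  have bdd: "bdd_below ((\<lambda>q. (norm (x - q))\<^sup>2) ` M)"
    by (rule bdd_belowI[of _ 0]) auto
  have d_le: "d \<le> (norm (x - q))\<^sup>2" if "q \<in> M" for q
    unfolding d_def using bdd that by (simp add: cInf_lower)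
  have "\<exists>q\<in>M. (norm (x - q))\<^sup>2 < d + 1 / (real n + 1)" for n
  proof -
    have "\<exists>v\<in>(\<lambda>q. (norm (x - q))\<^sup>2) ` M. v < d + 1 / (real n + 1)"
      unfolding d_def using ne by (intro cInf_lessD) auto
    then show ?thesis by blast
  qed
  then obtain m where mM: "\<And>n. m n \<in> M"
    and m_lt: "\<And>n. (norm (x - m n))\<^sup>2 < d + 1 / (real n + 1)"
    by metis
  have "Cauchy m"
  proof (rule metric_CauchyI)
    fix e :: real
    assume "e > 0"
    then obtain N :: nat where N: "4 / e\<^sup>2 < real N"
      using reals_Archimedean2 by blast
    have close: "(norm (x - m n))\<^sup>2 - d < e\<^sup>2 / 4" if "n \<ge> N" for n
    proof -
      have "4 / e\<^sup>2 < real n + 1" using N that by simp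
      then have "1 / (real n + 1) < e\<^sup>2 / 4" using \<open>e > 0\<close> by (simp add: field_simps)
      then show ?thesis using m_lt[of n] by (simp add: algebra_simps)
    qed
    have "dist (m a) (m b) < e" if "a \<ge> N" "b \<ge> N" for a b
    proof -
      have "(norm (m a - m b))\<^sup>2
          \<le> 2 * ((norm (x - m a))\<^sup>2 - d) + 2 * ((norm (x - m b))\<^sup>2 - d)"
        by (intro nearest_point_Cauchy_estimate[OF sub mM mM] d_le)
      then have "(norm (m a - m b))\<^sup>2 < e\<^sup>2"
        using close[OF that(1)] close[OF that(2)] by simp
      then show ?thesis
        using \<open>e > 0\<close> by (simp add: dist_norm power_less_imp_less_base)
    qed
    then show "\<exists>N. \<forall>a\<ge>N. \<forall>b\<ge>N. dist (m a) (m b) < e" by blast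
  qed
  then obtain p where lim: "m \<longlonglongrightarrow> p"
    using Cauchy_convergent convergent_def by blast
  have pM: "p \<in> M"
    using closed_sequentially[OF cl] mM lim by blast
  have "(norm (x - p))\<^sup>2 \<le> d"
  proof (rule LIMSEQ_le)
    show "(\<lambda>n. (norm (x - m n))\<^sup>2) \<longlonglongrightarrow> (norm (x - p))\<^sup>2"
      by (intro tendsto_intros lim)
    show "(\<lambda>n. d + 1 / (real n + 1)) \<longlonglongrightarrow> d"
      using tendsto_add[OF tendsto_const LIMSEQ_inverse_real_of_nat]
      by (simp add: inverse_eq_divide add.commute)
    show "\<exists>N. \<forall>n\<ge>N. (norm (x - m n))\<^sup>2 \<le> d + 1 / (real n + 1)"
      using m_lt less_imp_le by blast
  qed
  then have "norm (x - p) \<le> norm (x - q)" if "q \<in> M" for q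
    using d_le[OF that] by (simp add: power2_le_imp_le)
  with pM show ?thesis by blast
qed

lemma nearest_point_orthogonal:
  fixes x :: "'a::complex_inner"
  assumes sub: "is_subspace1 M" and pM: "p \<in> M"
    and nearest: "\<And>q. q \<in> M \<Longrightarrow> norm (x - p) \<le> norm (x - q)" and qM: "q \<in> M"
  shows "cinner (x - p) q = 0"
proof (rule ccontr)
  \<comment> \<open>Otherwise a small step from \<open>p\<close> in the direction \<open>q\<close> would bring us closer to \<open>x\<close>.\<close>
  define a where "a = cinner (x - p) q"
  define s where "s = 1 / ((norm q)\<^sup>2 + 1)"
  define t where "t = complex_of_real s * cnj a"
  have den: "0 < (norm q)\<^sup>2 + 1"
    by (simp add: add_nonneg_pos)
  then have s_pos: "s > 0"
    unfolding s_def by simp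
  assume "cinner (x - p) q \<noteq> 0"
  then have sa_pos: "s * (cmod a)\<^sup>2 > 0"
    using s_pos unfolding a_def by simp
  have "cinner (x - p) (t *\<^sub>C q) = complex_of_real s * (cnj a * a)"
    unfolding t_def a_def by (simp add: cinner_scaleC_right mult.assoc)
  also have "\<dots> = complex_of_real (s * (cmod a)\<^sup>2)"
    by (metis complex_norm_square mult.commute of_real_mult of_real_power)
  finally have ip: "cinner (x - p) (t *\<^sub>C q) = complex_of_real (s * (cmod a)\<^sup>2)" .
  have "p + t *\<^sub>C q \<in> M"
    using pM qM sub by (simp add: is_subspace1_add is_subspace1_scaleC)
  then have "(norm (x - p))\<^sup>2 \<le> (norm ((x - p) - t *\<^sub>C q))\<^sup>2"
    using nearest by (simp add: power_mono algebra_simps)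
  also have "\<dots> = (norm (x - p))\<^sup>2 + (s * cmod a * norm q)\<^sup>2 - 2 * (s * (cmod a)\<^sup>2)"
    using s_pos unfolding norm_diff_sq ip by (simp add: norm_scaleC t_def norm_mult)
  finally have "(s * (cmod a)\<^sup>2) * 2 \<le> (s * cmod a * norm q)\<^sup>2"
    by simp
  also have "\<dots> = (s * (cmod a)\<^sup>2) * (s * (norm q)\<^sup>2)"
    by (simp add: power2_eq_square algebra_simps)
  finally have "2 \<le> s * (norm q)\<^sup>2"
    using sa_pos by (rule mult_left_le_imp_le)
  moreover have "s * (norm q)\<^sup>2 < 1"
    unfolding s_def using den by (simp add: field_simps)
  ultimately show False by simp
qed

lemma orthogonal_point_unique:
  fixes x :: "'a::complex_inner"
  assumes sub: "is_subspace1 M"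
    and "p \<in> M" "\<forall>q\<in>M. cinner (x - p) q = 0"
    and "p' \<in> M" "\<forall>q\<in>M. cinner (x - p') q = 0"
  shows "p = p'"
proof -
  have "p - p' \<in> M" using assms is_subspace1_diff by blast
  then have "cinner ((x - p') - (x - p)) (p - p') = 0"
    using assms by (simp add: cinner_diff_left)
  then show ?thesis using cinner_self_eq_zero[of "p - p'"] by simp
qed

lemma orth_proj1:
  fixes M :: "'a::chilbert_space set"
  assumes "is_subspace1 M" "closed M"
  shows orth_proj1_in: "orth_proj1 M x \<in> M"
    and orth_proj1_orthogonal: "\<And>q. q \<in> M \<Longrightarrow> cinner (x - orth_proj1 M x) q = 0"
proof -
  have "\<exists>!p. p \<in> M \<and> (\<forall>q\<in>M. cinner (x - p) q = 0)"
    using nearest_point_exists[OF assms, of x] nearest_point_orthogonal[OF assms(1)]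
      orthogonal_point_unique[OF assms(1)] by metis
  then have "orth_proj1 M x \<in> M \<and> (\<forall>q\<in>M. cinner (x - orth_proj1 M x) q = 0)"
    unfolding orth_proj1_def by (rule theI')
  then show "orth_proj1 M x \<in> M" "\<And>q. q \<in> M \<Longrightarrow> cinner (x - orth_proj1 M x) q = 0"
    by auto
qed

lemma orth_proj1_eqI:
  fixes M :: "'a::chilbert_space set"
  assumes "is_subspace1 M" "closed M" "p \<in> M" "\<And>q. q \<in> M \<Longrightarrow> cinner (x - p) q = 0"
  shows "orth_proj1 M x = p"
  using orthogonal_point_unique[OF assms(1) orth_proj1_in[OF assms(1,2)] _ assms(3)]
    orth_proj1_orthogonal[OF assms(1,2)] assms(4) by blast

lemma orth_proj1_id:
  fixes M :: "'a::chilbert_space set"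
  assumes "is_subspace1 M" "closed M" "p \<in> M"
  shows "orth_proj1 M p = p"
  using orth_proj1_eqI[OF assms] by simp

lemma orth_proj1_add:
  fixes M :: "'a::chilbert_space set"
  assumes sub: "is_subspace1 M" and cl: "closed M"
  shows "orth_proj1 M (x + y) = orth_proj1 M x + orth_proj1 M y"
proof (rule orth_proj1_eqI[OF sub cl])
  show "orth_proj1 M x + orth_proj1 M y \<in> M"
    using orth_proj1_in[OF sub cl] is_subspace1_add[OF sub] by blast
  have eq: "x + y - (orth_proj1 M x + orth_proj1 M y)
      = (x - orth_proj1 M x) + (y - orth_proj1 M y)"
    by (simp add: algebra_simps)
  show "cinner (x + y - (orth_proj1 M x + orth_proj1 M y)) q = 0" if "q \<in> M" for q
    unfolding eq cinner_add_left
    using orth_proj1_orthogonal[OF sub cl that, of x] orth_proj1_orthogonal[OF sub cl that, of y]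
    by simp
qed

lemma orth_proj1_scaleC:
  fixes M :: "'a::chilbert_space set"
  assumes sub: "is_subspace1 M" and cl: "closed M"
  shows "orth_proj1 M (c *\<^sub>C x) = c *\<^sub>C orth_proj1 M x"
proof (rule orth_proj1_eqI[OF sub cl])
  show "c *\<^sub>C orth_proj1 M x \<in> M"
    using orth_proj1_in[OF sub cl] is_subspace1_scaleC[OF sub] by blast
  fix q assume "q \<in> M"
  then show "cinner (c *\<^sub>C x - c *\<^sub>C orth_proj1 M x) q = 0"
    using orth_proj1_orthogonal[OF sub cl]
    by (simp add: cv.scale_right_diff_distrib[symmetric] cinner_scaleC_left)
qed

section \<open>The graph space\<close>

instantiation prod :: (complex_vector, complex_vector) complex_vector
begin

definition scaleC_prod_def: "scaleC c z = (scaleC c (fst z), scaleC c (snd z))"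

instance
  by standard
    (simp_all add: scaleC_prod_def scaleC_add_right scaleC_add_left scaleC_scaleC scaleC_one
      scaleR_prod_def scaleR_scaleC fun_eq_iff)

end

lemma scaleC_Pair [simp]: "c *\<^sub>C (a, b) = (c *\<^sub>C a, c *\<^sub>C b)"
  by (simp add: scaleC_prod_def)

instantiation prod :: (complex_inner, complex_inner) complex_inner
begin

definition cinner_prod_def: "cinner z w = cinner (fst z) (fst w) + cinner (snd z) (snd w)"

instance
proof
  fix x y z :: "'a \<times> 'b" and r :: complex
  show "cinner x y = cnj (cinner y x)"
    unfolding cinner_prod_def by (metis cinner_commute complex_cnj_add)
  show "cinner (x + y) z = cinner x z + cinner y z"
    unfolding cinner_prod_def by (simp add: cinner_add_left)
  show "cinner (r *\<^sub>C x) y = cnj r * cinner x y"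
    unfolding cinner_prod_def by (simp add: scaleC_prod_def cinner_scaleC_left distrib_left)
  have sq: "cinner x x = complex_of_real ((norm (fst x))\<^sup>2 + (norm (snd x))\<^sup>2)"
    unfolding cinner_prod_def by (simp add: cinner_self_eq_norm_sq)
  show "0 \<le> Re (cinner x x)"
    unfolding sq by simp
  show "cinner x x = 0 \<longleftrightarrow> x = 0"
    unfolding sq of_real_eq_0_iff by (simp add: add_nonneg_eq_0_iff prod_eq_iff)
  show "norm x = sqrt (Re (cinner x x))"
    unfolding sq norm_prod_def by simp
qed

end

instance prod :: (chilbert_space, chilbert_space) chilbert_space ..

lemma cinner_Pair [simp]: "cinner (a, b) (c, d) = cinner a c + cinner b d"
  by (simp add: cinner_prod_def)

lemma ip2_eq_cinner: "ip2 z w = cinner z w"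
  unfolding ip2_def cinner_prod_def ..

lemma is_subspace2_iff: "is_subspace2 T \<longleftrightarrow> is_subspace1 T"
  unfolding is_subspace2_def is_subspace1_def
    plus_prod_def[symmetric] scaleC_prod_def[symmetric] zero_prod_def[symmetric] ..

lemma closed_subspace2_iff: "closed_subspace2 T \<longleftrightarrow> is_subspace1 T \<and> closed T"
  unfolding closed_subspace2_def is_subspace2_iff ..

lemma orth_proj2_eq: "orth_proj2 T z = orth_proj1 T z"
  unfolding orth_proj2_def orth_proj1_def ip2_eq_cinner minus_prod_def[symmetric] ..

lemma is_subspace1_Pair_add:
  "is_subspace1 T \<Longrightarrow> (x, f) \<in> T \<Longrightarrow> (y, g) \<in> T \<Longrightarrow> (x + y, f + g) \<in> T"
  using is_subspace1_add[of T "(x, f)" "(y, g)"] by simp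

lemma is_subspace1_Pair_diff:
  "is_subspace1 T \<Longrightarrow> (x, f) \<in> T \<Longrightarrow> (y, g) \<in> T \<Longrightarrow> (x - y, f - g) \<in> T"
  using is_subspace1_diff[of T "(x, f)" "(y, g)"] by simp

lemma is_subspace1_Pair_scaleC:
  "is_subspace1 T \<Longrightarrow> (x, f) \<in> T \<Longrightarrow> (c *\<^sub>C x, c *\<^sub>C f) \<in> T"
  using is_subspace1_scaleC[of T "(x, f)" c] by simp

lemma is_subspace1_Pair_zero: "is_subspace1 T \<Longrightarrow> (0, 0) \<in> T"
  using is_subspace1_zero[of T] by (simp add: zero_prod_def)

lemma fin_dim1_span: "fin_dim1 V \<longleftrightarrow> (\<exists>B. finite B \<and> V \<subseteq> cv.span B)"
proof -
  have "{\<Sum>b\<in>B. c b *\<^sub>C b | c. True} = cv.span B" if "finite B" for B :: "'a set"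
    unfolding cv.span_finite[OF that] by (simp add: image_def)
  then show ?thesis
    unfolding fin_dim1_def by (metis (no_types, lifting))
qed

lemma fin_dim1_subset: "fin_dim1 V \<Longrightarrow> U \<subseteq> V \<Longrightarrow> fin_dim1 U"
  unfolding fin_dim1_def by blast

lemma fin_dim2_iff: "fin_dim2 V \<longleftrightarrow> fin_dim1 V"
proof -
  have "(\<Sum>b\<in>B. c b *\<^sub>C b) = (\<Sum>b\<in>B. c b *\<^sub>C fst b, \<Sum>b\<in>B. c b *\<^sub>C snd b)"
    for B and c :: "'a \<times> 'a \<Rightarrow> complex"
    by (simp add: prod_eq_iff fst_sum snd_sum scaleC_prod_def)
  then show ?thesis
    unfolding fin_dim2_def fin_dim1_def by simp
qed

lemma finite_rank_perturbation_iff: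
  "finite_rank_perturbation T S \<longleftrightarrow> fin_dim1 (range (\<lambda>z. orth_proj1 T z - orth_proj1 S z))"
  unfolding finite_rank_perturbation_def minus_prod_def[symmetric] orth_proj2_eq fin_dim2_iff ..

definition clinear_on :: "'a::complex_vector set \<Rightarrow> ('a \<Rightarrow> 'b::complex_vector) \<Rightarrow> bool" where
  "clinear_on V f \<longleftrightarrow>
     (\<forall>x\<in>V. \<forall>y\<in>V. f (x + y) = f x + f y) \<and> (\<forall>c. \<forall>x\<in>V. f (c *\<^sub>C x) = c *\<^sub>C f x)"

lemma clinear_on_sum:
  assumes sub: "is_subspace1 V" and f: "clinear_on V f" and "finite B" "B \<subseteq> V"
  shows "(\<Sum>v\<in>B. u v *\<^sub>C v) \<in> V \<and> f (\<Sum>v\<in>B. u v *\<^sub>C v) = (\<Sum>v\<in>B. u v *\<^sub>C f v)"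
  using \<open>finite B\<close> \<open>B \<subseteq> V\<close>
proof (induction B rule: finite_induct)
  case empty
  have "f 0 = 0"
    using f is_subspace1_zero[OF sub] unfolding clinear_on_def by (metis scaleC_zero_left)
  then show ?case using is_subspace1_zero[OF sub] by simp
next
  case (insert a B)
  then have "u a *\<^sub>C a \<in> V"
    using is_subspace1_scaleC[OF sub] by simp
  with insert show ?case
    using f is_subspace1_add[OF sub] unfolding clinear_on_def by simp
qed

lemma clinear_on_comp_fst:
  assumes g: "clinear_on D g" and V: "fst ` V \<subseteq> D"
  shows "clinear_on V (\<lambda>z. g (fst z))"
proof -
  have "g (fst (x + y)) = g (fst x) + g (fst y)" if "x \<in> V" "y \<in> V" for x y
    using g V that unfolding clinear_on_def fst_add by blast
  moreover have "g (fst (c *\<^sub>C x)) = c *\<^sub>C g (fst x)" if "x \<in> V" for c x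
    using g V that unfolding clinear_on_def scaleC_prod_def fst_conv by blast
  ultimately show ?thesis
    unfolding clinear_on_def by blast
qed

lemma independent_image_clinear_on:
  fixes f :: "'a::complex_inner \<Rightarrow> 'b::complex_vector"
  assumes sub: "is_subspace1 V" and f: "clinear_on V f"
    and ker: "\<And>x. x \<in> V \<Longrightarrow> f x = 0 \<Longrightarrow> x = 0"
    and CV: "C \<subseteq> V" and indep: "cv.independent C"
  shows "cv.independent (f ` C)" and "inj_on f C"
proof -
  have f_diff: "f (x - y) = f x - f y" if "x \<in> V" "y \<in> V" for x y
    using f that is_subspace1_diff[OF sub that] unfolding clinear_on_def
    by (metis diff_add_cancel eq_diff_eq)
  show inj: "inj_on f C"
  proof (rule inj_onI)
    fix x y assume "x \<in> C" "y \<in> C" "f x = f y"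
    then have "x \<in> V" "y \<in> V" "f x = f y"
      using CV by auto
    then show "x = y"
      using ker[of "x - y"] f_diff is_subspace1_diff[OF sub] by simp
  qed
  show "cv.independent (f ` C)"
    unfolding cv.independent_explicit_module
  proof (intro allI impI)
    fix t u w
    assume t: "finite t" "t \<subseteq> f ` C" and sum0: "(\<Sum>v\<in>t. u v *\<^sub>C v) = 0" and "w \<in> t"
    define t' where "t' = {c \<in> C. f c \<in> t}"
    have t_eq: "t = f ` t'" unfolding t'_def using t by auto
    have inj': "inj_on f t'" using inj unfolding t'_def by (rule inj_on_subset) auto
    have fin': "finite t'" using t t_eq inj' finite_imageD by blast
    have t'V: "t' \<subseteq> V" using CV unfolding t'_def by auto
    have "f (\<Sum>c\<in>t'. u (f c) *\<^sub>C c) = (\<Sum>v\<in>t. u v *\<^sub>C v)"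
      using clinear_on_sum[OF sub f fin' t'V] unfolding t_eq by (simp add: sum.reindex[OF inj'])
    then have "(\<Sum>c\<in>t'. u (f c) *\<^sub>C c) = 0"
      using ker clinear_on_sum[OF sub f fin' t'V] sum0 by simp
    moreover obtain c where "c \<in> t'" "w = f c" using \<open>w \<in> t\<close> t_eq by blast
    ultimately show "u w = 0"
      using cv.independentD[OF indep fin', of "\<lambda>c. u (f c)"] unfolding t'_def by auto
  qed
qed

lemma fin_dim1_clinear_on_inj:
  fixes f :: "'a::complex_inner \<Rightarrow> 'b::complex_inner"
  assumes sub: "is_subspace1 V" and f: "clinear_on V f"
    and ker: "\<And>x. x \<in> V \<Longrightarrow> f x = 0 \<Longrightarrow> x = 0"
    and img: "fin_dim1 (f ` V)"
  shows "fin_dim1 V"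
proof -
  obtain B where "finite B" and B: "f ` V \<subseteq> cv.span B"
    using img unfolding fin_dim1_span by blast
  obtain C where CV: "C \<subseteq> V" and indep: "cv.independent C" and VC: "V \<subseteq> cv.span C"
    by (rule cv.basis_exists)
  have "finite (f ` C)"
    using cv.independent_span_bound[OF \<open>finite B\<close> independent_image_clinear_on(1)[OF sub f ker CV indep]]
      B CV by blast
  then have "finite C"
    using finite_imageD independent_image_clinear_on(2)[OF sub f ker CV indep] by blast
  with VC show ?thesis
    unfolding fin_dim1_span by blast
qed

lemma orth_proj1_diff_orthogonal:
  fixes T W :: "'a::chilbert_space set"
  assumes "is_subspace1 T" "closed T" "is_subspace1 W" "closed W" "W \<subseteq> T"
  shows "orth_proj1 T z - orth_proj1 W z \<in> {t \<in> T. \<forall>w\<in>W. cinner t w = 0}"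
proof -
  have "orth_proj1 T z - orth_proj1 W z \<in> T"
    using assms orth_proj1_in is_subspace1_diff by blast
  moreover have "cinner (orth_proj1 T z - orth_proj1 W z) w = 0" if "w \<in> W" for w
  proof -
    have "orth_proj1 T z - orth_proj1 W z = (z - orth_proj1 W z) - (z - orth_proj1 T z)"
      by simp
    moreover have "cinner (z - orth_proj1 W z) w = 0" "cinner (z - orth_proj1 T z) w = 0"
      using assms that orth_proj1_orthogonal by blast+
    ultimately show ?thesis
      by (simp only: cinner_diff_left) simp
  qed
  ultimately show ?thesis by blast
qed

lemma fin_dim1_range_orth_proj1_diff:
  fixes T S :: "'a::chilbert_space set"
  assumes T: "is_subspace1 T" "closed T" and S: "is_subspace1 S" "closed S"
    and fin_T: "fin_dim1 {t \<in> T. \<forall>w\<in>T \<inter> S. cinner t w = 0}"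
    and fin_S: "fin_dim1 {s \<in> S. \<forall>w\<in>T \<inter> S. cinner s w = 0}"
  shows "fin_dim1 (range (\<lambda>z. orth_proj1 T z - orth_proj1 S z))"
proof -
  have W: "is_subspace1 (T \<inter> S)" "closed (T \<inter> S)"
    using T S unfolding is_subspace1_def by auto
  obtain C1 where "finite C1" and C1: "{t \<in> T. \<forall>w\<in>T \<inter> S. cinner t w = 0} \<subseteq> cv.span C1"
    using fin_T unfolding fin_dim1_span by blast
  obtain C2 where "finite C2" and C2: "{s \<in> S. \<forall>w\<in>T \<inter> S. cinner s w = 0} \<subseteq> cv.span C2"
    using fin_S unfolding fin_dim1_span by blast
  have "orth_proj1 T z - orth_proj1 S z \<in> cv.span (C1 \<union> C2)" for z
  proof -
    let ?P = "orth_proj1 (T \<inter> S) z"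
    have "orth_proj1 T z - ?P \<in> cv.span (C1 \<union> C2)" "orth_proj1 S z - ?P \<in> cv.span (C1 \<union> C2)"
      using orth_proj1_diff_orthogonal[OF T W] orth_proj1_diff_orthogonal[OF S W]
        C1 C2 cv.span_mono[of C1 "C1 \<union> C2"] cv.span_mono[of C2 "C1 \<union> C2"] by blast+
    then have "(orth_proj1 T z - ?P) - (orth_proj1 S z - ?P) \<in> cv.span (C1 \<union> C2)"
      by (rule cv.span_diff)
    then show ?thesis by simp
  qed
  then show ?thesis
    unfolding fin_dim1_span using \<open>finite C1\<close> \<open>finite C2\<close> by blast
qed

section \<open>Linear relations\<close>

lemma rel_dom_eq_fst_image: "rel_dom T = fst ` T"
  unfolding rel_dom_def by force

lemma is_subspace1_rel_dom:
  assumes "is_subspace1 T"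
  shows "is_subspace1 (rel_dom T)"
  unfolding is_subspace1_def rel_dom_def
  using is_subspace1_Pair_zero[OF assms] is_subspace1_Pair_add[OF assms]
    is_subspace1_Pair_scaleC[OF assms] by blast

lemma is_subspace1_rel_restrict:
  assumes "is_subspace1 R" "is_subspace1 D"
  shows "is_subspace1 (rel_restrict R D)"
  using assms unfolding is_subspace1_def rel_restrict_def by (simp add: zero_prod_def)

lemma snd_image_rel_restrict_iff: "g \<in> snd ` rel_restrict R D \<longleftrightarrow> (\<exists>x\<in>D. (x, g) \<in> R)"
proof
  assume "g \<in> snd ` rel_restrict R D"
  then obtain z where "z \<in> R" "fst z \<in> D" "g = snd z"
    unfolding rel_restrict_def by blast
  then show "\<exists>x\<in>D. (x, g) \<in> R"
    by (intro bexI[of _ "fst z"]) simp_all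
next
  assume "\<exists>x\<in>D. (x, g) \<in> R"
  then obtain x where "(x, g) \<in> rel_restrict R D"
    unfolding rel_restrict_def by auto
  then show "g \<in> snd ` rel_restrict R D"
    by (rule rev_image_eqI) simp
qed

lemma is_subspace1_snd_image:
  fixes R :: "('a::complex_inner \<times> 'a) set"
  assumes "is_subspace1 R"
  shows "is_subspace1 (snd ` R)"
  unfolding is_subspace1_def
proof (intro conjI ballI allI)
  show "0 \<in> snd ` R"
  proof (rule rev_image_eqI)
    show "0 \<in> R" using is_subspace1_zero[OF assms] .
  qed simp
next
  fix x y assume "x \<in> snd ` R" "y \<in> snd ` R"
  then obtain z w where "z \<in> R" "w \<in> R" "x = snd z" "y = snd w"
    by blast
  then show "x + y \<in> snd ` R"
  proof (intro rev_image_eqI)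
    show "z + w \<in> R" using is_subspace1_add[OF assms \<open>z \<in> R\<close> \<open>w \<in> R\<close>] .
  qed simp
next
  fix c x assume "x \<in> snd ` R"
  then obtain z where "z \<in> R" "x = snd z"
    by blast
  then show "c *\<^sub>C x \<in> snd ` R"
  proof (intro rev_image_eqI)
    show "c *\<^sub>C z \<in> R" using is_subspace1_scaleC[OF assms \<open>z \<in> R\<close>] .
  qed (simp add: scaleC_prod_def)
qed

lemma rel_app_zero_closed_subspace:
  fixes A :: "('a::chilbert_space \<times> 'a) set"
  assumes "is_subspace1 A" "closed A"
  shows "is_subspace1 (rel_app A 0)" "closed (rel_app A 0)"
proof -
  show "is_subspace1 (rel_app A 0)"
    unfolding is_subspace1_def rel_app_def
    using is_subspace1_Pair_zero[OF assms(1)] is_subspace1_Pair_add[OF assms(1), of 0 _ 0]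
      is_subspace1_Pair_scaleC[OF assms(1), of 0] by auto
  have "rel_app A 0 = Pair 0 -` A"
    unfolding rel_app_def by auto
  then show "closed (rel_app A 0)"
    using closed_vimage[OF assms(2), of "Pair 0"] by (simp add: continuous_on_Pair)
qed

lemma op_part_subset: "op_part A \<subseteq> A"
  unfolding op_part_def by blast

lemma is_subspace1_op_part: "is_subspace1 A \<Longrightarrow> is_subspace1 (op_part A)"
  unfolding is_subspace1_def op_part_def ip2_eq_cinner
  by (simp add: cinner_add_left cinner_scaleC_left)

lemma op_part_single_valued:
  assumes sub: "is_subspace1 A" and "(x, f) \<in> op_part A" "(x, g) \<in> op_part A"
  shows "f = g"
proof -
  have diff: "(0, f - g) \<in> op_part A"
    using is_subspace1_Pair_diff[OF is_subspace1_op_part[OF sub] assms(2,3)] by simp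
  then have "(0, f - g) \<in> mult_part A"
    unfolding mult_part_def using op_part_subset by blast
  with diff have "cinner (f - g) (f - g) = 0"
    unfolding op_part_def ip2_def by auto
  then show ?thesis
    using cinner_self_eq_zero[of "f - g"] by simp
qed

lemma op_part_exists:
  fixes A :: "('a::chilbert_space \<times> 'a) set"
  assumes sub: "is_subspace1 A" and cl: "closed A" and x: "x \<in> rel_dom A"
  shows "\<exists>g. (x, g) \<in> op_part A"
proof -
  obtain f where f: "(x, f) \<in> A"
    using x unfolding rel_dom_def by blast
  let ?p = "orth_proj1 (rel_app A 0) f"
  have "(0, ?p) \<in> A"
    using orth_proj1_in[OF rel_app_zero_closed_subspace[OF sub cl]] unfolding rel_app_def by simp
  then have "(x, f - ?p) \<in> A"
    using is_subspace1_Pair_diff[OF sub f] by fastforce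
  moreover have "ip2 (x, f - ?p) w = 0" if "w \<in> mult_part A" for w
    using that orth_proj1_orthogonal[OF rel_app_zero_closed_subspace[OF sub cl]]
    unfolding mult_part_def rel_app_def ip2_def by auto
  ultimately show ?thesis
    unfolding op_part_def by blast
qed

text \<open>The operator part \<open>A\<^sub>s\<close> as a function; its value outside \<open>rel_dom A\<close> is unspecified.\<close>

definition op_fun :: "('a::complex_inner \<times> 'a) set \<Rightarrow> 'a \<Rightarrow> 'a" where
  "op_fun A x = (THE g. (x, g) \<in> op_part A)"

lemma op_fun_eq:
  assumes "is_subspace1 A" "(x, g) \<in> op_part A"
  shows "op_fun A x = g"
  unfolding op_fun_def using assms op_part_single_valued by (intro the_equality) auto

lemma op_fun_in_op_part:
  fixes A :: "('a::chilbert_space \<times> 'a) set"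
  assumes "is_subspace1 A" "closed A" "x \<in> rel_dom A"
  shows "(x, op_fun A x) \<in> op_part A"
  using op_part_exists[OF assms] op_fun_eq[OF assms(1)] by blast

lemma clinear_on_op_fun:
  fixes A :: "('a::chilbert_space \<times> 'a) set"
  assumes "is_subspace1 A" "closed A"
  shows "clinear_on (rel_dom A) (op_fun A)"
  unfolding clinear_on_def
  using op_fun_in_op_part[OF assms] op_fun_eq[OF assms(1)]
    is_subspace1_Pair_add[OF is_subspace1_op_part[OF assms(1)]]
    is_subspace1_Pair_scaleC[OF is_subspace1_op_part[OF assms(1)]]
  by blast

lemma hermitian_cinner_symmetric:
  assumes "hermitian T" "(x, f) \<in> T" "(y, g) \<in> T"
  shows "cinner f y = cinner x g"
proof -
  have "(x, f) \<in> rel_adjoint T"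
    using assms unfolding hermitian_def by blast
  then show ?thesis
    using assms(3) unfolding rel_adjoint_def by auto
qed

lemma hermitian_cinner_rel_app_zero:
  "hermitian T \<Longrightarrow> (0, h) \<in> T \<Longrightarrow> (x, f) \<in> T \<Longrightarrow> cinner h x = 0"
  using hermitian_cinner_symmetric[of T 0 h x f] by simp

lemma rel_dom_subset_orth_compl_rel_app_zero:
  assumes "hermitian T"
  shows "rel_dom T \<subseteq> orth_compl1 (rel_app T 0)"
proof
  fix x assume "x \<in> rel_dom T"
  then obtain f where xf: "(x, f) \<in> T"
    unfolding rel_dom_def by blast
  have "cinner x h = 0" if "(0, h) \<in> T" for h
    using hermitian_cinner_rel_app_zero[OF assms that xf] cinner_orthogonal_commute[of h x] by simp
  then show "x \<in> orth_compl1 (rel_app T 0)"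
    unfolding orth_compl1_def rel_app_def by simp
qed

lemma resolvent_set_surj:
  assumes "l \<in> resolvent_set S"
  shows "\<exists>x f. (x, f) \<in> S \<and> v = l *\<^sub>C x - f"
proof -
  have "v \<in> rel_dom {(l *\<^sub>C x - f, x) | x f. (x, f) \<in> S}"
    using assms unfolding resolvent_set_def Let_def by blast
  then show ?thesis
    unfolding rel_dom_def by blast
qed

lemma hermitian_resolvent_orthogonal_eq_zero:
  assumes herm: "hermitian S" and l: "l \<in> resolvent_set S" and xf: "(x, f) \<in> S"
    and perp: "\<And>y. y \<in> rel_dom S \<Longrightarrow> cinner (l *\<^sub>C x - f) y = 0"
  shows "x = 0"
proof (cases "cnj l = l")
  case True
  obtain y g where yg: "(y, g) \<in> S" and x_eq: "x = l *\<^sub>C y - g"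
    using resolvent_set_surj[OF l] by blast
  have "cinner (l *\<^sub>C x - f) y = 0"
    using perp yg unfolding rel_dom_def by blast
  then have "cinner f y = l * cinner x y"
    using True by (simp add: cinner_diff_left cinner_scaleC_left)
  moreover have "cinner f y = cinner x g"
    using hermitian_cinner_symmetric[OF herm xf yg] .
  ultimately have "cinner x (l *\<^sub>C y - g) = 0"
    by (simp add: cinner_diff_right cinner_scaleC_right)
  then have "cinner x x = 0"
    using x_eq by simp
  then show ?thesis
    by (rule cinner_self_eq_zero)
next
  case False
  have "cinner (l *\<^sub>C x - f) x = 0"
    using perp xf unfolding rel_dom_def by blast
  then have "cinner x (l *\<^sub>C x - f) = 0"
    using cinner_orthogonal_commute by blast
  \<comment> \<open>The form \<open>cinner f x\<close> is real, so the non-real \<open>l\<close> forces \<open>cinner x x = 0\<close>.\<close>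
  moreover have "(cnj l - l) * cinner x x
      = cinner (l *\<^sub>C x - f) x - cinner x (l *\<^sub>C x - f)"
    using hermitian_cinner_symmetric[OF herm xf xf]
    by (simp add: cinner_diff_left cinner_diff_right cinner_scaleC_left cinner_scaleC_right
        algebra_simps)
  ultimately have "(cnj l - l) * cinner x x = 0"
    using \<open>cinner (l *\<^sub>C x - f) x = 0\<close> by simp
  with False have "cinner x x = 0"
    by simp
  then show ?thesis
    by (rule cinner_self_eq_zero)
qed

lemma orth_compl_rel_dom_subset_rel_app_zero:
  assumes sub: "is_subspace1 S" and herm: "hermitian S" and l: "l \<in> resolvent_set S"
  shows "orth_compl1 (rel_dom S) \<subseteq> rel_app S 0"
proof
  fix w assume "w \<in> orth_compl1 (rel_dom S)"
  then have perp: "\<And>y. y \<in> rel_dom S \<Longrightarrow> cinner w y = 0"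
    unfolding orth_compl1_def by blast
  obtain x f where xf: "(x, f) \<in> S" and w: "w = l *\<^sub>C x - f"
    using resolvent_set_surj[OF l] by blast
  have "x = 0"
    using hermitian_resolvent_orthogonal_eq_zero[OF herm l xf] perp w by blast
  then have "(0, - w) \<in> S"
    using xf w by simp
  then show "w \<in> rel_app S 0"
    using is_subspace1_Pair_scaleC[OF sub, of 0 "- w" "- 1"] unfolding rel_app_def by simp
qed

lemma rel_app_zero_subset_if_resolvent:
  assumes "is_subspace1 S" "hermitian S" "l \<in> resolvent_set S"
    and "hermitian A" "rel_dom S \<subseteq> rel_dom A"
  shows "rel_app A 0 \<subseteq> rel_app S 0"
proof -
  have "rel_app A 0 \<subseteq> orth_compl1 (rel_dom S)"
    using assms(4,5) hermitian_cinner_rel_app_zero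
    unfolding rel_app_def rel_dom_def orth_compl1_def by blast
  then show ?thesis
    using orth_compl_rel_dom_subset_rel_app_zero[OF assms(1-3)] by blast
qed

lemma rel_dom_rel_sum: "rel_dom S \<subseteq> rel_dom A \<Longrightarrow> rel_dom (rel_sum S A) = rel_dom S"
  unfolding rel_dom_def rel_sum_def by auto

lemma op_part_value_in_reducing:
  fixes A :: "('a::chilbert_space \<times> 'a) set"
  assumes red: "reduces M A" and sub: "is_subspace1 A"
    and xg: "(x, g) \<in> op_part A" and "x \<in> M"
  shows "g \<in> M"
proof -
  have M: "is_subspace1 M" "closed M" and proj: "\<forall>(x, f)\<in>A. (orth_proj1 M x, orth_proj1 M f) \<in> A"
    using red unfolding reduces_def by auto
  let ?Pg = "orth_proj1 M g"
  have "(x, ?Pg) \<in> A"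
    using proj op_part_subset xg orth_proj1_id[OF M \<open>x \<in> M\<close>] by fastforce
  then have "(0, g - ?Pg) \<in> mult_part A"
    using is_subspace1_Pair_diff[OF sub _ \<open>(x, ?Pg) \<in> A\<close>, of x g] op_part_subset xg
    unfolding mult_part_def by auto
  then have "cinner g (g - ?Pg) = 0"
    using xg unfolding op_part_def ip2_def by auto
  moreover have "cinner ?Pg (g - ?Pg) = 0"
    using orth_proj1_orthogonal[OF M orth_proj1_in[OF M]] cinner_orthogonal_commute by blast
  ultimately have "cinner (g - ?Pg) (g - ?Pg) = 0"
    by (simp add: cinner_diff_left)
  then have "g - ?Pg = 0"
    by (rule cinner_self_eq_zero)
  then show ?thesis
    using orth_proj1_in[OF M, of g] by simp
qed

section \<open>Finite rank perturbations\<close>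

lemma finite_rank_perturbation_if_finite_rank_op_part:
  fixes T S A :: "('a::chilbert_space \<times> 'a) set"
  assumes T: "closed_subspace2 T" and S: "closed_subspace2 S" and A: "closed_subspace2 A"
    and herm_S: "hermitian S" and herm_A: "hermitian A" and dom_SA: "rel_dom S \<subseteq> rel_dom A"
    and T_eq: "T = rel_sum S A" and l: "l \<in> resolvent_set S"
    and finite_rank: "finite_rank_operator (rel_restrict (op_part A) (rel_dom T))"
  shows "finite_rank_perturbation T S"
proof -
  have subT: "is_subspace1 T" "closed T" and subS: "is_subspace1 S" "closed S"
    and subA: "is_subspace1 A" "closed A"
    using T S A unfolding closed_subspace2_iff by auto
  have dom_T: "rel_dom T = rel_dom S"
    using rel_dom_rel_sum[OF dom_SA] T_eq by simp
  have A0_S0: "(0, w) \<in> S" if "(0, w) \<in> A" for w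
    using rel_app_zero_subset_if_resolvent[OF subS(1) herm_S l herm_A dom_SA] that
    unfolding rel_app_def by blast
  let ?W = "T \<inter> S"
  let ?\<phi> = "\<lambda>z. op_fun A (fst z)"
  \<comment> \<open>Where \<open>A\<^sub>s\<close> vanishes, \<open>T = S + A\<close> and \<open>S\<close> coincide, so \<open>?\<phi>\<close> is injective on both
    orthogonal complements of \<open>?W\<close>.\<close>
  have fin_perp: "fin_dim1 {v \<in> V. \<forall>w\<in>?W. cinner v w = 0}"
    if V: "is_subspace1 V" "fst ` V \<subseteq> rel_dom T"
      and agree: "\<And>x h. (x, h) \<in> V \<Longrightarrow> (x, 0) \<in> A \<Longrightarrow> (x, h) \<in> ?W" for V
  proof (rule fin_dim1_clinear_on_inj[where f = ?\<phi>])
    let ?V = "{v \<in> V. \<forall>w\<in>?W. cinner v w = 0}"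
    have dom: "fst ` ?V \<subseteq> rel_dom A"
      using V(2) dom_T dom_SA by auto
    show "is_subspace1 ?V"
      using is_subspace1_orthogonal[OF V(1)] .
    show "clinear_on ?V ?\<phi>"
      using clinear_on_comp_fst[OF clinear_on_op_fun[OF subA] dom] .
    show "z = 0" if "z \<in> ?V" and "?\<phi> z = 0" for z
    proof -
      obtain x h where z: "z = (x, h)" by fastforce
      have "(x, 0) \<in> A"
        using op_fun_in_op_part[OF subA, of x] op_part_subset dom that z by fastforce
      then have "z \<in> ?W"
        using agree that z by blast
      then show "z = 0"
        using that cinner_self_eq_zero by blast
    qed
    have "?\<phi> z \<in> snd ` rel_restrict (op_part A) (rel_dom T)" if "z \<in> ?V" for z
      unfolding snd_image_rel_restrict_iff
      using that V(2) dom op_fun_in_op_part[OF subA] by blast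
    then have "?\<phi> ` ?V \<subseteq> snd ` rel_restrict (op_part A) (rel_dom T)"
      by blast
    then show "fin_dim1 (?\<phi> ` ?V)"
      using finite_rank fin_dim1_subset unfolding finite_rank_operator_def by blast
  qed
  have "fin_dim1 {t \<in> T. \<forall>w\<in>?W. cinner t w = 0}"
  proof (rule fin_perp[OF subT(1)])
    show "fst ` T \<subseteq> rel_dom T"
      by (simp add: rel_dom_eq_fst_image)
    fix x h assume xh: "(x, h) \<in> T" and "(x, 0) \<in> A"
    then obtain f g where "h = f + g" "(x, f) \<in> S" "(x, g) \<in> A"
      unfolding T_eq rel_sum_def by blast
    moreover have "(0, g) \<in> S"
      using A0_S0 is_subspace1_Pair_diff[OF subA(1) \<open>(x, g) \<in> A\<close> \<open>(x, 0) \<in> A\<close>] by simp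
    ultimately show "(x, h) \<in> ?W"
      using xh is_subspace1_Pair_add[OF subS(1), of x f 0 g] by simp
  qed
  moreover have "fin_dim1 {s \<in> S. \<forall>w\<in>?W. cinner s w = 0}"
  proof (rule fin_perp[OF subS(1)])
    show "fst ` S \<subseteq> rel_dom T"
      using dom_T by (simp add: rel_dom_eq_fst_image)
    fix x f assume "(x, f) \<in> S" and "(x, 0) \<in> A"
    then have "(x, f + 0) \<in> T"
      unfolding T_eq rel_sum_def by blast
    with \<open>(x, f) \<in> S\<close> show "(x, f) \<in> ?W"
      by simp
  qed
  ultimately show ?thesis
    unfolding finite_rank_perturbation_iff
    using fin_dim1_range_orth_proj1_diff[OF subT subS] by blast
qed

lemma finite_rank_op_part_if_finite_rank_perturbation:
  fixes T S A :: "('a::chilbert_space \<times> 'a) set"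
  assumes T: "closed_subspace2 T" and S: "closed_subspace2 S" and A: "is_subspace2 A"
    and herm_T: "hermitian T" and T_eq: "T = rel_sum S A"
    and red: "reduces (orth_compl1 (rel_app T 0)) A"
    and finite_rank: "finite_rank_perturbation T S"
  shows "finite_rank_operator (rel_restrict (op_part A) (rel_dom T))"
proof -
  have subT: "is_subspace1 T" "closed T" and subS: "is_subspace1 S" "closed S"
    using T S unfolding closed_subspace2_iff by auto
  have subA: "is_subspace1 A"
    using A unfolding is_subspace2_iff .
  let ?R = "rel_restrict (op_part A) (rel_dom T)"
  let ?M = "orth_compl1 (rel_app T 0)"
  let ?\<psi> = "\<lambda>g. (0, g) - orth_proj1 S (0, g)"
  have range_M: "g \<in> ?M" if g: "g \<in> snd ` ?R" for g
  proof -
    obtain x where xg: "(x, g) \<in> op_part A" and "x \<in> rel_dom T"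
      using g unfolding snd_image_rel_restrict_iff by blast
    have "x \<in> ?M"
      using \<open>x \<in> rel_dom T\<close> rel_dom_subset_orth_compl_rel_app_zero[OF herm_T] by blast
    then show ?thesis
      by (rule op_part_value_in_reducing[OF red subA xg])
  qed
  \<comment> \<open>The witness is \<open>(x, f + g)\<close> with \<open>(x, f) \<in> S\<close> and \<open>g = A\<^sub>s x\<close>.\<close>
  have range_\<psi>: "?\<psi> g \<in> range (\<lambda>z. orth_proj1 T z - orth_proj1 S z)"
    if g: "g \<in> snd ` ?R" for g
  proof -
    obtain x where xg: "(x, g) \<in> op_part A" and "x \<in> rel_dom T"
      using g unfolding snd_image_rel_restrict_iff by blast
    then obtain f where xf: "(x, f) \<in> S"
      unfolding T_eq rel_dom_def rel_sum_def by blast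
    then have "(x, f + g) \<in> T"
      using xg op_part_subset unfolding T_eq rel_sum_def by blast
    moreover have "(x, f + g) = (x, f) + (0, g)"
      by simp
    ultimately have "orth_proj1 T (x, f + g) - orth_proj1 S (x, f + g)
        = ((x, f) + (0, g)) - ((x, f) + orth_proj1 S (0, g))"
      using orth_proj1_id[OF subT] orth_proj1_add[OF subS] orth_proj1_id[OF subS xf] by metis
    also have "\<dots> = ?\<psi> g"
      by (rule add_diff_cancel_left)
    finally show ?thesis
      by (rule range_eqI[OF sym])
  qed
  have "fin_dim1 (snd ` ?R)"
  proof (rule fin_dim1_clinear_on_inj[where f = ?\<psi>])
    show "is_subspace1 (snd ` ?R)"
      using is_subspace1_snd_image[OF is_subspace1_rel_restrict[OF is_subspace1_op_part[OF subA]
          is_subspace1_rel_dom[OF subT(1)]]] .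
    show "clinear_on (snd ` ?R) ?\<psi>"
      unfolding clinear_on_def
      using orth_proj1_add[OF subS, of "(0, _)" "(0, _)"] orth_proj1_scaleC[OF subS, of _ "(0, _)"]
      by (simp add: algebra_simps cv.scale_right_diff_distrib)
    show "g = 0" if "g \<in> snd ` ?R" and "?\<psi> g = 0" for g
    proof -
      have "(0, g) \<in> S"
        using that(2) orth_proj1_in[OF subS, of "(0, g)"] by simp
      then have "(0, g + 0) \<in> T"
        using is_subspace1_Pair_zero[OF subA] unfolding T_eq rel_sum_def by blast
      then have "cinner g g = 0"
        using range_M[OF that(1)] unfolding orth_compl1_def rel_app_def by simp
      then show "g = 0"
        by (rule cinner_self_eq_zero)
    qed
    have "?\<psi> ` snd ` ?R \<subseteq> range (\<lambda>z. orth_proj1 T z - orth_proj1 S z)"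
      using range_\<psi> by (rule image_subsetI)
    then show "fin_dim1 (?\<psi> ` snd ` ?R)"
      by (rule fin_dim1_subset[OF finite_rank[unfolded finite_rank_perturbation_iff]])
  qed
  moreover have "single_valued_rel ?R"
    unfolding single_valued_rel_def rel_restrict_def using op_part_single_valued[OF subA] by auto
  ultimately show ?thesis
    unfolding finite_rank_operator_def by blast
qed

theorem theorem3p6:
  fixes T S A :: "('a::chilbert_space \<times> 'a) set"
  assumes "closed_subspace2 T" "closed_subspace2 S" "closed_subspace2 A"
    and "hermitian T" "hermitian S" "hermitian A"
    and "rel_dom T = rel_dom S" "rel_dom S \<subseteq> rel_dom A"
    and "T = rel_sum S A"
    and "resolvent_set T \<inter> resolvent_set S \<noteq> {}"
  shows "(finite_rank_operator (rel_restrict (op_part A) (rel_dom T))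
            \<longrightarrow> finite_rank_perturbation T S)
       \<and> (finite_rank_perturbation T S
            \<and> reduces (orth_compl1 (rel_app T 0)) S
            \<and> reduces (orth_compl1 (rel_app T 0)) A
            \<longrightarrow> finite_rank_operator (rel_restrict (op_part A) (rel_dom T)))"
proof -
  obtain l where "l \<in> resolvent_set S"
    using assms(10) by blast
  moreover have "is_subspace2 A"
    using assms(3) unfolding closed_subspace2_def by blast
  ultimately show ?thesis
    using finite_rank_perturbation_if_finite_rank_op_part[OF assms(1-3,5,6,8,9)]
      finite_rank_op_part_if_finite_rank_perturbation[OF assms(1,2) _ assms(4,9)]
    by blast
qed

end
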